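(* Consider the no-show model with homogeneous costs in the context. For $p\ge1$, $j\in[N]$, $\rho\ge0$, $\mathbf s\in\mathcal S$, let $\omega'_j(\rho,\mathbf s)=\sup_{\boldsymbol\xi\in\Xi}\{g(\mathbf s,\boldsymbol\xi)-\rho\|\boldsymbol\xi-\widehat{\boldsymbol\xi}^j\|_p^p\}$. Then $$\omega'_j(\rho,\mathbf s)=\sup_{\boldsymbol\lambda\in\Lambda,\ \mathbf y\in\mathcal Y(\boldsymbol\lambda)}\sum_{i=1}^nf_{ij}(\lambda_i,y_i),\qquad f_{ij}(\lambda_i,y_i):=\sup_{u^L_i\lambda_i\le\mu_i\le u^U_i\lambda_i}\{y_i(\mu_i-s_i)-\rho|\mu_i-\widehat\mu^j_i|^p-\rho|\lambda_i-\widehat\lambda^j_i|^p\}.$$ Moreover, without loss of optimality, $(\boldsymbol\lambda,\mathbf y)$ in this supremum may be restricted to satisfy: $y_n\in\{C,-d_0\}$; for each $i\in[n-1]$, $y_i=-d_0$ or $y_i=y_{i+1}+\lambda_{i+1}$; and $y_i\in\mathcal Y_i$ for all $i\in[n]$, where $\mathcal Y_i=\{-d_0+m:m=0,\dots,n-i\}\cup\{C+m:m=0,\dots,n-i\}$.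
   Context: Notation: $[m]=\{1,\dots,m\}$. $n,N\ge1$, $T>0$, $\mathcal S=\{\mathbf s\in\mathbb R^n:\mathbf s\ge0,\sum_is_i\le T\}$. Homogeneous costs: $c_1=\dots=c_n=1$ (waiting), $d_1=\dots=d_n=d_0\ge0$ (idleness), overtime $C\ge0$. Bounds $0\le u^L_i<u^U_i<\infty$; integer $K\in[n]$. $\Lambda=\{\boldsymbol\lambda\in\{0,1\}^n:\sum_i(1-\lambda_i)\le K\}$, $\Xi=\{(\boldsymbol\mu,\boldsymbol\lambda)\in\mathbb R^n\times\Lambda:u^L_i\lambda_i\le\mu_i\le u^U_i\lambda_i\ \forall i\}$; data $\widehat{\boldsymbol\xi}^j=(\widehat{\boldsymbol\mu}^j,\widehat{\boldsymbol\lambda}^j)\in\Xi$. For $\boldsymbol\xi=(\boldsymbol\mu,\boldsymbol\lambda)\in\Xi$, $g(\mathbf s,\boldsymbol\xi)$ is the optimal value of $\min_{\mathbf w\in\mathbb R^{n+1},\mathbf v\in\mathbb R^n}\sum_{i=1}^n(c_i\lambda_iw_i+d_iv_i)+Cw_{n+1}$ s.t. $w_i-v_{i-1}=\mu_{i-1}+w_{i-1}-s_{i-1}$ ($i=2,\dots,n+1$), $\mathbf w\ge0,w_1=0,\mathbf v\ge0$. For $\boldsymbol\lambda\in\Lambda$, $\mathcal Y(\boldsymbol\lambda)=\{\mathbf y\in\mathbb R^n:-y_i\le d_i\ \forall i;\ y_{i-1}-y_i\le c_i\lambda_i\ (i=2,\dots,n);\ y_n\le C\}$. $\|\cdot\|_p$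 is the $p$-norm on $\mathbb R^{2n}$. *)

theory Defs
  imports Complex_Main
begin

text \<open>Vectors in R^n are functions nat => real, indexed by 1..n (paper indexing);
  values outside the index range play no role.\<close>

definition S_set :: "nat \<Rightarrow> real \<Rightarrow> (nat \<Rightarrow> real) set" where
  "S_set n T = {s. (\<forall>i\<in>{1..n}. 0 \<le> s i) \<and> (\<Sum>i=1..n. s i) \<le> T}"

definition Lambda_set :: "nat \<Rightarrow> nat \<Rightarrow> (nat \<Rightarrow> real) set" where
  "Lambda_set n K = {lam. (\<forall>i\<in>{1..n}. lam i \<in> {0, 1}) \<and> (\<Sum>i=1..n. 1 - lam i) \<le> real K}"

definition Xi_set :: "nat \<Rightarrow> nat \<Rightarrow> (nat \<Rightarrow> real) \<Rightarrow> (nat \<Rightarrow> real) \<Rightarrow> ((nat \<Rightarrow> real) \<times> (nat \<Rightarrow> real)) set" where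
  "Xi_set n K uL uU = {(mu, lam). lam \<in> Lambda_set n K \<and>
      (\<forall>i\<in>{1..n}. uL i * lam i \<le> mu i \<and> mu i \<le> uU i * lam i)}"

definition g_feasible :: "nat \<Rightarrow> (nat \<Rightarrow> real) \<Rightarrow> (nat \<Rightarrow> real) \<Rightarrow> (nat \<Rightarrow> real) \<Rightarrow> (nat \<Rightarrow> real) \<Rightarrow> bool" where
  "g_feasible n s mu w v \<longleftrightarrow> w 1 = 0 \<and> (\<forall>i\<in>{1..n+1}. 0 \<le> w i) \<and> (\<forall>i\<in>{1..n}. 0 \<le> v i) \<and>
     (\<forall>i\<in>{2..n+1}. w i - v (i - 1) = mu (i - 1) + w (i - 1) - s (i - 1))"

definition g_val :: "nat \<Rightarrow> (nat \<Rightarrow> real) \<Rightarrow> (nat \<Rightarrow> real) \<Rightarrow> real \<Rightarrow> (nat \<Rightarrow> real)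
    \<Rightarrow> (nat \<Rightarrow> real) \<times> (nat \<Rightarrow> real) \<Rightarrow> real" where
  "g_val n c d C s xi = (case xi of (mu, lam) \<Rightarrow>
     Inf {(\<Sum>i=1..n. c i * lam i * w i + d i * v i) + C * w (n + 1) | w v. g_feasible n s mu w v})"

definition Y_set :: "nat \<Rightarrow> (nat \<Rightarrow> real) \<Rightarrow> (nat \<Rightarrow> real) \<Rightarrow> real \<Rightarrow> (nat \<Rightarrow> real) \<Rightarrow> (nat \<Rightarrow> real) set" where
  "Y_set n c d C lam = {y. (\<forall>i\<in>{1..n}. - y i \<le> d i) \<and>
      (\<forall>i\<in>{2..n}. y (i - 1) - y i \<le> c i * lam i) \<and> y n \<le> C}"

definition Yi_set :: "nat \<Rightarrow> real \<Rightarrow> real \<Rightarrow> nat \<Rightarrow> real set" where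
  "Yi_set n d0 C i = {- d0 + real m | m. m \<le> n - i} \<union> {C + real m | m. m \<le> n - i}"

text \<open>omega'_j(rho, s) for the data point (muh, lamh) = hat xi^j; the p-th power of the
  p-norm on R^{2n} is written out as a sum of p-th powers of absolute values.\<close>
definition omega' :: "nat \<Rightarrow> nat \<Rightarrow> (nat \<Rightarrow> real) \<Rightarrow> (nat \<Rightarrow> real) \<Rightarrow> (nat \<Rightarrow> real) \<Rightarrow> (nat \<Rightarrow> real)
    \<Rightarrow> real \<Rightarrow> real \<Rightarrow> (nat \<Rightarrow> real) \<Rightarrow> (nat \<Rightarrow> real) \<Rightarrow> real \<Rightarrow> (nat \<Rightarrow> real) \<Rightarrow> real" where
  "omega' n K uL uU c d C p muh lamh rho s =
     Sup {g_val n c d C s (mu, lam)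
           - rho * ((\<Sum>i=1..n. \<bar>mu i - muh i\<bar> powr p) + (\<Sum>i=1..n. \<bar>lam i - lamh i\<bar> powr p))
          | mu lam. (mu, lam) \<in> Xi_set n K uL uU}"

definition f_comp :: "(nat \<Rightarrow> real) \<Rightarrow> (nat \<Rightarrow> real) \<Rightarrow> real \<Rightarrow> (nat \<Rightarrow> real) \<Rightarrow> (nat \<Rightarrow> real)
    \<Rightarrow> real \<Rightarrow> (nat \<Rightarrow> real) \<Rightarrow> nat \<Rightarrow> real \<Rightarrow> real \<Rightarrow> real" where
  "f_comp uL uU p muh lamh rho s i lami yi =
     Sup {yi * (mu - s i) - rho * \<bar>mu - muh i\<bar> powr p - rho * \<bar>lami - lamh i\<bar> powr p
          | mu. uL i * lami \<le> mu \<and> mu \<le> uU i * lami}"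

end

theory Submission
  imports Defs
begin

(* For fixed xi = (mu, lambda), g(s, xi) is a linear program whose dual feasible set is Y(lambda)
   and whose dual objective sum_i y_i (mu_i - s_i) is separable in i. Weak duality bounds g from
   below by every dual value; subtracting the separable transport cost and choosing each mu_i
   nearly optimal in f_ij shows that every value sum_i f_ij(lambda_i, y_i) is approached by
   omega'_j. Conversely the LP is solved in closed form: the waiting times follow Lindley's
   recursion w_(i+1) = max(0, w_i + mu_i - s_i), and the dual built backwards from y_n (C if
   there is overtime, -d0 otherwise) by y_i = y_(i+1) + lambda_(i+1) while patient i+1 waits and
   y_i = -d0 otherwise satisfies complementary slackness. This dual has the structure of the
   restricted supremum and takes values in the finite sets Y_i, which also bounds that supremum. *)

lemma cSup_eq_by_approximation:
  fixes A B B' :: "real set"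
  assumes "A \<noteq> {}" and "B' \<subseteq> B" and "bdd_above B'"
    and dominated: "\<And>a. a \<in> A \<Longrightarrow> \<exists>b\<in>B'. a \<le> b"
    and approximated: "\<And>b e. b \<in> B \<Longrightarrow> 0 < e \<Longrightarrow> \<exists>a\<in>A. b - e \<le> a"
  shows "Sup A = Sup B \<and> Sup A = Sup B'"
proof -
  have "B' \<noteq> {}" using \<open>A \<noteq> {}\<close> dominated by blast
  have A_le: "a \<le> Sup B'" if "a \<in> A" for a
    using dominated[OF that] cSup_upper[OF _ \<open>bdd_above B'\<close>] by force
  then have "bdd_above A" by (rule bdd_aboveI)
  have B_le: "b \<le> Sup A" if "b \<in> B" for b
  proof (rule field_le_epsilon)
    fix e :: real assume "0 < e"
    with approximated[OF that] obtain a where "a \<in> A" "b - e \<le> a" by blast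
    then show "b \<le> Sup A + e" using cSup_upper[OF _ \<open>bdd_above A\<close>] by force
  qed
  then have "bdd_above B" by (rule bdd_aboveI)
  have "Sup A \<le> Sup B'" using cSup_least[OF \<open>A \<noteq> {}\<close> A_le] .
  moreover have "Sup B' \<le> Sup B" using cSup_subset_mono[OF \<open>B' \<noteq> {}\<close> \<open>bdd_above B\<close> \<open>B' \<subseteq> B\<close>] .
  moreover have "Sup B \<le> Sup A" using cSup_least[OF _ B_le] \<open>B' \<noteq> {}\<close> \<open>B' \<subseteq> B\<close> by blast
  ultimately show ?thesis by linarith
qed

lemma sum_by_parts:
  fixes y w :: "nat \<Rightarrow> 'a::comm_ring"
  assumes "1 \<le> m"
  shows "(\<Sum>i=1..m. y i * (w (i + 1) - w i))
    = y m * w (m + 1) - y 1 * w 1 + (\<Sum>i=2..m. (y (i - 1) - y i) * w i)"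
  using assms
proof (induction m rule: nat_induct_at_least)
  case base
  then show ?case by (simp add: algebra_simps)
next
  case (Suc m)
  then have "(\<Sum>i=2..Suc m. (y (i - 1) - y i) * w i)
      = (\<Sum>i=2..m. (y (i - 1) - y i) * w i) + (y m - y (Suc m)) * w (Suc m)"
    by simp
  with Suc show ?case by (simp add: algebra_simps)
qed

section \<open>Duality for the second-stage linear program\<close>

definition lp_objective :: "nat \<Rightarrow> (nat \<Rightarrow> real) \<Rightarrow> (nat \<Rightarrow> real) \<Rightarrow> real \<Rightarrow> (nat \<Rightarrow> real)
    \<Rightarrow> (nat \<Rightarrow> real) \<Rightarrow> (nat \<Rightarrow> real) \<Rightarrow> real" where
  "lp_objective n c d C lam w v = (\<Sum>i=1..n. c i * lam i * w i + d i * v i) + C * w (n + 1)"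

lemma g_val_eq_Inf_lp_objective:
  "g_val n c d C s (mu, lam) = Inf {lp_objective n c d C lam w v | w v. g_feasible n s mu w v}"
  by (simp add: g_val_def lp_objective_def)

(* The duality gap as a sum of complementary-slackness products. *)
lemma lp_objective_minus_dual_value:
  assumes feas: "g_feasible n s mu w v" and "1 \<le> n"
  shows "lp_objective n c d C lam w v - (\<Sum>i=1..n. y i * (mu i - s i))
    = (C - y n) * w (n + 1) + (\<Sum>i=2..n. (c i * lam i - (y (i - 1) - y i)) * w i)
      + (\<Sum>i=1..n. (d i + y i) * v i)"
proof -
  have w1: "w 1 = 0" using feas by (simp add: g_feasible_def)
  have flow: "mu i - s i = w (i + 1) - w i - v i" if "i \<in> {1..n}" for i
  proof -
    have "i + 1 \<in> {2..n + 1}" using that by simp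
    with feas have "w (i + 1) - v (i + 1 - 1) = mu (i + 1 - 1) + w (i + 1 - 1) - s (i + 1 - 1)"
      unfolding g_feasible_def by blast
    then show ?thesis by simp
  qed
  have "(\<Sum>i=1..n. y i * (mu i - s i)) = (\<Sum>i=1..n. y i * (w (i + 1) - w i)) - (\<Sum>i=1..n. y i * v i)"
    by (simp add: flow right_diff_distrib sum_subtractf)
  also have "\<dots> = y n * w (n + 1) + (\<Sum>i=2..n. (y (i - 1) - y i) * w i) - (\<Sum>i=1..n. y i * v i)"
    using sum_by_parts[OF \<open>1 \<le> n\<close>, of y w] w1 by simp
  finally have dual: "(\<Sum>i=1..n. y i * (mu i - s i))
      = y n * w (n + 1) + (\<Sum>i=2..n. (y (i - 1) - y i) * w i) - (\<Sum>i=1..n. y i * v i)" .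
  have "(\<Sum>i=1..n. c i * lam i * w i) = c 1 * lam 1 * w 1 + (\<Sum>i=2..n. c i * lam i * w i)"
    using sum.atLeast_Suc_atMost[OF \<open>1 \<le> n\<close>] by (simp add: numeral_2_eq_2)
  then have "lp_objective n c d C lam w v
      = C * w (n + 1) + (\<Sum>i=2..n. c i * lam i * w i) + (\<Sum>i=1..n. d i * v i)"
    unfolding w1 by (simp add: lp_objective_def sum.distrib)
  with dual show ?thesis
    by (simp add: algebra_simps sum.distrib sum_subtractf)
qed

lemma dual_value_le_lp_objective:
  assumes feas: "g_feasible n s mu w v" and "1 \<le> n" and y: "y \<in> Y_set n c d C lam"
  shows "(\<Sum>i=1..n. y i * (mu i - s i)) \<le> lp_objective n c d C lam w v"
proof -
  from feas have w: "\<forall>i\<in>{1..n+1}. 0 \<le> w i" and v: "\<forall>i\<in>{1..n}. 0 \<le> v i"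
    by (simp_all add: g_feasible_def)
  from y have dy: "\<forall>i\<in>{1..n}. 0 \<le> d i + y i"
    and cy: "\<forall>i\<in>{2..n}. 0 \<le> c i * lam i - (y (i - 1) - y i)" and "0 \<le> C - y n"
    by (auto simp: Y_set_def)
  have "0 \<le> (C - y n) * w (n + 1)"
    using \<open>0 \<le> C - y n\<close> w by simp
  moreover have "0 \<le> (\<Sum>i=2..n. (c i * lam i - (y (i - 1) - y i)) * w i)"
    using cy w by (intro sum_nonneg mult_nonneg_nonneg) auto
  moreover have "0 \<le> (\<Sum>i=1..n. (d i + y i) * v i)"
    using dy v by (intro sum_nonneg mult_nonneg_nonneg) auto
  ultimately show ?thesis
    using lp_objective_minus_dual_value[OF feas \<open>1 \<le> n\<close>, of c d C lam y] by linarith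
qed

(* Lindley's recursion for the waiting times; index 0 is unused. *)
fun wait_time :: "(nat \<Rightarrow> real) \<Rightarrow> (nat \<Rightarrow> real) \<Rightarrow> nat \<Rightarrow> real" where
  "wait_time mu s 0 = 0"
| "wait_time mu s (Suc i) = (if i = 0 then 0 else max 0 (wait_time mu s i + mu i - s i))"

definition idle_time :: "(nat \<Rightarrow> real) \<Rightarrow> (nat \<Rightarrow> real) \<Rightarrow> nat \<Rightarrow> real" where
  "idle_time mu s i = max 0 (s i - mu i - wait_time mu s i)"

lemma wait_time_nonneg: "0 \<le> wait_time mu s i"
  by (cases i) auto

lemma wait_time_step: "1 \<le> i \<Longrightarrow> wait_time mu s (i + 1) = max 0 (wait_time mu s i + mu i - s i)"
  by simp

lemma g_feasible_wait_idle: "g_feasible n s mu (wait_time mu s) (idle_time mu s)"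
  unfolding g_feasible_def
proof (intro conjI ballI)
  have flow: "wait_time mu s (k + 1) - idle_time mu s k = mu k + wait_time mu s k - s k"
    if "1 \<le> k" for k
    unfolding wait_time_step[OF that] idle_time_def by simp
  fix i assume "i \<in> {2..n + 1}"
  then have "1 \<le> i - 1" and "i - 1 + 1 = i" by auto
  with flow[of "i - 1"]
  show "wait_time mu s i - idle_time mu s (i - 1) = mu (i - 1) + wait_time mu s (i - 1) - s (i - 1)"
    by simp
qed (auto simp: wait_time_nonneg idle_time_def)

lemma dual_value_le_g_val:
  assumes "1 \<le> n" and "y \<in> Y_set n c d C lam"
  shows "(\<Sum>i=1..n. y i * (mu i - s i)) \<le> g_val n c d C s (mu, lam)"
  unfolding g_val_eq_Inf_lp_objective
proof (rule cInf_greatest)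
  show "{lp_objective n c d C lam w v | w v. g_feasible n s mu w v} \<noteq> {}"
    using g_feasible_wait_idle by blast
qed (use dual_value_le_lp_objective[OF _ assms] in blast)

(* The dual solution complementary to the Lindley schedule w, built backwards from the overtime
   variable. *)
function backward_dual :: "nat \<Rightarrow> real \<Rightarrow> real \<Rightarrow> (nat \<Rightarrow> real) \<Rightarrow> (nat \<Rightarrow> real) \<Rightarrow> nat \<Rightarrow> real" where
  "backward_dual n C d0 lam w i =
    (if 0 < w (i + 1) then (if n \<le> i then C else backward_dual n C d0 lam w (i + 1) + lam (i + 1))
     else - d0)"
  by auto
termination by (relation "measure (\<lambda>(n, C, d0, lam, w, i). n - i)") auto

declare backward_dual.simps [simp del]

lemma backward_dual_last: "backward_dual n C d0 lam w n = C \<or> backward_dual n C d0 lam w n = - d0"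
  by (simp add: backward_dual.simps)

lemma backward_dual_step:
  "i < n \<Longrightarrow> backward_dual n C d0 lam w i = - d0
    \<or> backward_dual n C d0 lam w i = backward_dual n C d0 lam w (i + 1) + lam (i + 1)"
  by (simp add: backward_dual.simps[of n C d0 lam w i])

lemma backward_dual_ge:
  assumes "\<forall>i\<in>{1..n}. 0 \<le> lam i" and "0 \<le> d0 + C"
  shows "- d0 \<le> backward_dual n C d0 lam w i"
proof (induction "n - i" arbitrary: i)
  case 0
  then show ?case
    using assms by (subst backward_dual.simps) auto
next
  case (Suc k)
  then have "i < n" and "- d0 \<le> backward_dual n C d0 lam w (i + 1)" and "0 \<le> lam (i + 1)"
    using assms by auto
  then show ?case
    by (subst backward_dual.simps) auto
qed

lemma backward_dual_pred:
  "2 \<le> i \<Longrightarrow> i \<le> n \<Longrightarrow> backward_dual n C d0 lam w (i - 1)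
    = (if 0 < w i then backward_dual n C d0 lam w i + lam i else - d0)"
  by (subst backward_dual.simps) auto

lemma backward_dual_in_Y_set:
  assumes lam: "\<forall>i\<in>{1..n}. 0 \<le> lam i" and "0 \<le> d0" and "0 \<le> C"
  shows "backward_dual n C d0 lam w \<in> Y_set n (\<lambda>_. 1) (\<lambda>_. d0) C lam"
proof -
  have ge: "- backward_dual n C d0 lam w i \<le> d0" for i
    using backward_dual_ge[OF lam, of d0 C w i] assms by simp
  have "backward_dual n C d0 lam w (i - 1) - backward_dual n C d0 lam w i \<le> lam i"
    if "i \<in> {2..n}" for i
  proof -
    have "0 \<le> lam i" using lam that by simp
    then show ?thesis using that ge[of i] backward_dual_pred[of i n C d0 lam w] by auto
  qed
  then show ?thesis
    using ge backward_dual_last[of n C d0 lam w] assms by (auto simp: Y_set_def)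
qed

lemma lp_objective_wait_idle_eq_dual_value:
  fixes mu s lam :: "nat \<Rightarrow> real" and C d0 :: real
  assumes "1 \<le> n" and lam: "\<forall>i\<in>{1..n}. 0 \<le> lam i"
  defines "w \<equiv> wait_time mu s" and "y \<equiv> backward_dual n C d0 lam (wait_time mu s)"
  shows "lp_objective n (\<lambda>_. 1) (\<lambda>_. d0) C lam w (idle_time mu s) = (\<Sum>i=1..n. y i * (mu i - s i))"
proof -
  have w: "0 \<le> w i" for i
    by (simp add: w_def wait_time_nonneg)
  have "(C - y n) * w (n + 1) = 0"
    using w[of "n + 1"] by (auto simp: y_def w_def backward_dual.simps[of n])
  moreover have "(\<Sum>i=2..n. (1 * lam i - (y (i - 1) - y i)) * w i) = 0"
  proof (intro sum.neutral ballI)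
    fix i assume "i \<in> {2..n}"
    then show "(1 * lam i - (y (i - 1) - y i)) * w i = 0"
      using w[of i] backward_dual_pred[of i n C d0 lam w] by (auto simp: y_def w_def)
  qed
  moreover have "(\<Sum>i=1..n. (d0 + y i) * idle_time mu s i) = 0"
  proof (intro sum.neutral ballI)
    fix i assume "i \<in> {1..n}"
    then have "w (i + 1) = 0" if "0 < idle_time mu s i"
      using that by (simp add: w_def idle_time_def wait_time_step)
    then show "(d0 + y i) * idle_time mu s i = 0"
      using w[of "i + 1"] by (auto simp: y_def w_def backward_dual.simps[of n C d0 lam _ i] idle_time_def)
  qed
  moreover note lp_objective_minus_dual_value[OF g_feasible_wait_idle[of n s mu] \<open>1 \<le> n\<close>,
      of "\<lambda>_. 1" "\<lambda>_. d0" C lam y, folded w_def]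
  ultimately show ?thesis
    by linarith
qed

lemma g_val_eq_backward_dual_value:
  assumes "1 \<le> n" and lam: "\<forall>i\<in>{1..n}. 0 \<le> lam i" and "0 \<le> d0" and "0 \<le> C"
  shows "g_val n (\<lambda>_. 1) (\<lambda>_. d0) C s (mu, lam)
    = (\<Sum>i=1..n. backward_dual n C d0 lam (wait_time mu s) i * (mu i - s i))"
  unfolding g_val_eq_Inf_lp_objective
proof (rule cInf_eq_minimum)
  show "(\<Sum>i=1..n. backward_dual n C d0 lam (wait_time mu s) i * (mu i - s i))
      \<in> {lp_objective n (\<lambda>_. 1) (\<lambda>_. d0) C lam w v | w v. g_feasible n s mu w v}"
    using g_feasible_wait_idle lp_objective_wait_idle_eq_dual_value[OF \<open>1 \<le> n\<close> lam, symmetric]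
    by blast
next
  fix x assume "x \<in> {lp_objective n (\<lambda>_. 1) (\<lambda>_. d0) C lam w v | w v. g_feasible n s mu w v}"
  then show "(\<Sum>i=1..n. backward_dual n C d0 lam (wait_time mu s) i * (mu i - s i)) \<le> x"
    using dual_value_le_lp_objective[OF _ \<open>1 \<le> n\<close> backward_dual_in_Y_set[OF assms(2-4)]] by blast
qed

lemma structured_dual_in_Yi_set:
  assumes lam: "\<forall>i\<in>{1..n}. lam i \<in> {0, 1}" and last: "y n = C \<or> y n = - d0"
    and step: "\<forall>i\<in>{1..n-1}. y i = - d0 \<or> y i = y (i + 1) + lam (i + 1)"
    and i: "i \<in> {1..n}"
  shows "y i \<in> Yi_set n d0 C i"
proof -
  have "\<exists>m \<le> n - i. y i = - d0 + real m \<or> y i = C + real m"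
    using i
  proof (induction "n - i" arbitrary: i)
    case 0
    then show ?case using last by auto
  next
    case (Suc k)
    then have "i < n" and "k = n - (i + 1)" by simp_all
    with Suc.hyps(1)[of "i + 1"] obtain m where "m \<le> n - (i + 1)"
      and m: "y (i + 1) = - d0 + real m \<or> y (i + 1) = C + real m"
      by auto
    with \<open>i < n\<close> have "m \<le> n - i" "m + 1 \<le> n - i" by simp_all
    from Suc.prems \<open>i < n\<close> have "y i = - d0 \<or> y i = y (i + 1) + lam (i + 1)" and "lam (i + 1) \<in> {0, 1}"
      using step lam by auto
    then consider "y i = - d0" | "y i = y (i + 1)" | "y i = y (i + 1) + 1"
      by auto
    then show ?case
    proof cases
      case 1
      then show ?thesis by (intro exI[of _ 0]) simp
    next
      case 2
      then show ?thesis using m \<open>m \<le> n - i\<close> by auto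
    next
      case 3
      then show ?thesis using m \<open>m + 1 \<le> n - i\<close> by (intro exI[of _ "m + 1"]) auto
    qed
  qed
  then show ?thesis
    by (auto simp: Yi_set_def)
qed

lemma box_objective_le:
  fixes y mu t a b rho x z p :: real
  assumes "0 \<le> rho" and "a \<le> mu" and "mu \<le> b"
  shows "y * (mu - t) - rho * x powr p - rho * z powr p \<le> \<bar>y\<bar> * (\<bar>a\<bar> + \<bar>b\<bar> + \<bar>t\<bar>)"
proof -
  have "y * (mu - t) \<le> \<bar>y\<bar> * \<bar>mu - t\<bar>"
    by (metis abs_ge_self abs_mult)
  also have "\<dots> \<le> \<bar>y\<bar> * (\<bar>a\<bar> + \<bar>b\<bar> + \<bar>t\<bar>)"
    using assms by (intro mult_left_mono) auto
  finally have "y * (mu - t) \<le> \<bar>y\<bar> * (\<bar>a\<bar> + \<bar>b\<bar> + \<bar>t\<bar>)" .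
  moreover have "0 \<le> rho * x powr p" and "0 \<le> rho * z powr p"
    using \<open>0 \<le> rho\<close> by simp_all
  ultimately show ?thesis
    by linarith
qed

lemma f_comp_ge:
  assumes "0 \<le> rho" and "uL i * lami \<le> mu" and "mu \<le> uU i * lami"
  shows "yi * (mu - s i) - rho * \<bar>mu - muh i\<bar> powr p - rho * \<bar>lami - lamh i\<bar> powr p
    \<le> f_comp uL uU p muh lamh rho s i lami yi"
  unfolding f_comp_def
proof (rule cSup_upper)
  show "bdd_above {yi * (mu - s i) - rho * \<bar>mu - muh i\<bar> powr p - rho * \<bar>lami - lamh i\<bar> powr p
      | mu. uL i * lami \<le> mu \<and> mu \<le> uU i * lami}"
    using box_objective_le[OF \<open>0 \<le> rho\<close>] by (intro bdd_aboveI) blast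
qed (use assms in blast)

lemma f_comp_le:
  assumes "0 \<le> rho" and "uL i * lami \<le> uU i * lami"
  shows "f_comp uL uU p muh lamh rho s i lami yi \<le> \<bar>yi\<bar> * (\<bar>uL i * lami\<bar> + \<bar>uU i * lami\<bar> + \<bar>s i\<bar>)"
  unfolding f_comp_def
  using box_objective_le[OF \<open>0 \<le> rho\<close>] assms(2) by (intro cSup_least) blast+

lemma sum_f_comp_approx:
  assumes box: "\<forall>i\<in>{1..n}. uL i * lam i \<le> uU i * lam i" and "0 < e"
  obtains mu where "\<forall>i\<in>{1..n}. uL i * lam i \<le> mu i \<and> mu i \<le> uU i * lam i"
    and "(\<Sum>i=1..n. f_comp uL uU p muh lamh rho s i (lam i) (y i)) - e
      \<le> (\<Sum>i=1..n. y i * (mu i - s i) - rho * \<bar>mu i - muh i\<bar> powr p - rho * \<bar>lam i - lamh i\<bar> powr p)"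
proof -
  define e' where "e' = e / (real n + 1)"
  have "0 < e'" and "real n * e' \<le> e"
    using \<open>0 < e\<close> by (auto simp: e'_def field_simps)
  have "\<exists>m. uL i * lam i \<le> m \<and> m \<le> uU i * lam i \<and> f_comp uL uU p muh lamh rho s i (lam i) (y i) - e'
      < y i * (m - s i) - rho * \<bar>m - muh i\<bar> powr p - rho * \<bar>lam i - lamh i\<bar> powr p"
    if "i \<in> {1..n}" for i
  proof -
    have "f_comp uL uU p muh lamh rho s i (lam i) (y i) - e' < f_comp uL uU p muh lamh rho s i (lam i) (y i)"
      using \<open>0 < e'\<close> by simp
    then show ?thesis
      unfolding f_comp_def by (rule less_cSupE) (use box that in auto)
  qed
  then obtain mu where mu: "\<forall>i\<in>{1..n}. uL i * lam i \<le> mu i \<and> mu i \<le> uU i * lam i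
      \<and> f_comp uL uU p muh lamh rho s i (lam i) (y i) - e'
        < y i * (mu i - s i) - rho * \<bar>mu i - muh i\<bar> powr p - rho * \<bar>lam i - lamh i\<bar> powr p"
    by metis
  have "(\<Sum>i=1..n. f_comp uL uU p muh lamh rho s i (lam i) (y i)) - e
      \<le> (\<Sum>i=1..n. f_comp uL uU p muh lamh rho s i (lam i) (y i) - e')"
    using \<open>real n * e' \<le> e\<close> by (simp add: sum_subtractf)
  also have "\<dots> \<le> (\<Sum>i=1..n. y i * (mu i - s i) - rho * \<bar>mu i - muh i\<bar> powr p - rho * \<bar>lam i - lamh i\<bar> powr p)"
    using mu by (intro sum_mono) (simp add: less_imp_le)
  finally show ?thesis
    using mu that by blast
qed

lemma dual_value_minus_penalty_split:
  "(\<Sum>i=1..n. y i * (mu i - s i)) - rho * ((\<Sum>i=1..n. \<bar>mu i - muh i\<bar> powr p) + (\<Sum>i=1..n. \<bar>lam i - lamh i\<bar> powr p))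
    = (\<Sum>i=1..n. y i * (mu i - s i) - rho * \<bar>mu i - muh i\<bar> powr p - rho * \<bar>lam i - lamh i\<bar> powr p)"
  by (simp add: sum_subtractf sum_distrib_left distrib_left)

section \<open>Interchanging the suprema\<close>

context
  fixes n K :: nat and uL uU s muh lamh :: "nat \<Rightarrow> real" and d0 C p rho :: real
  assumes n_pos: "1 \<le> n" and d0_nonneg: "0 \<le> d0" and C_nonneg: "0 \<le> C" and rho_nonneg: "0 \<le> rho"
    and bounds: "\<forall>i\<in>{1..n}. 0 \<le> uL i \<and> uL i < uU i"
begin

abbreviation (input) omega_objectives :: "real set" where
  "omega_objectives \<equiv> {g_val n (\<lambda>_. 1) (\<lambda>_. d0) C s (mu, lam)
      - rho * ((\<Sum>i=1..n. \<bar>mu i - muh i\<bar> powr p) + (\<Sum>i=1..n. \<bar>lam i - lamh i\<bar> powr p))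
    | mu lam. (mu, lam) \<in> Xi_set n K uL uU}"

abbreviation (input) dual_values :: "real set" where
  "dual_values \<equiv> {\<Sum>i=1..n. f_comp uL uU p muh lamh rho s i (lam i) (y i)
    | lam y. lam \<in> Lambda_set n K \<and> y \<in> Y_set n (\<lambda>_. 1) (\<lambda>_. d0) C lam}"

abbreviation (input) structured_dual_values :: "real set" where
  "structured_dual_values \<equiv> {\<Sum>i=1..n. f_comp uL uU p muh lamh rho s i (lam i) (y i)
    | lam y. lam \<in> Lambda_set n K \<and> y \<in> Y_set n (\<lambda>_. 1) (\<lambda>_. d0) C lam
      \<and> (y n = C \<or> y n = - d0)
      \<and> (\<forall>i\<in>{1..n-1}. y i = - d0 \<or> y i = y (i + 1) + lam (i + 1))
      \<and> (\<forall>i\<in>{1..n}. y i \<in> Yi_set n d0 C i)}"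

lemma omega_objectives_nonempty: "(muh, lamh) \<in> Xi_set n K uL uU \<Longrightarrow> omega_objectives \<noteq> {}"
  by blast

lemma Lambda_set_box_nonempty:
  assumes "lam \<in> Lambda_set n K"
  shows "\<forall>i\<in>{1..n}. uL i * lam i \<le> uU i * lam i"
proof
  fix i assume "i \<in> {1..n}"
  then have "lam i = 0 \<or> lam i = 1" and "uL i < uU i"
    using assms bounds by (auto simp: Lambda_set_def)
  then show "uL i * lam i \<le> uU i * lam i" by auto
qed

lemma omega_objectives_dominated:
  assumes "a \<in> omega_objectives"
  shows "\<exists>b\<in>structured_dual_values. a \<le> b"
proof -
  from assms obtain mu lam where xi: "(mu, lam) \<in> Xi_set n K uL uU"
    and a: "a = g_val n (\<lambda>_. 1) (\<lambda>_. d0) C s (mu, lam)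
        - rho * ((\<Sum>i=1..n. \<bar>mu i - muh i\<bar> powr p) + (\<Sum>i=1..n. \<bar>lam i - lamh i\<bar> powr p))"
    by blast
  from xi have "lam \<in> Lambda_set n K" and lam01: "\<forall>i\<in>{1..n}. lam i \<in> {0, 1}"
    and box: "\<forall>i\<in>{1..n}. uL i * lam i \<le> mu i \<and> mu i \<le> uU i * lam i"
    by (auto simp: Xi_set_def Lambda_set_def)
  then have lam: "\<forall>i\<in>{1..n}. 0 \<le> lam i" by auto
  define y where "y = backward_dual n C d0 lam (wait_time mu s)"
  have Y: "y \<in> Y_set n (\<lambda>_. 1) (\<lambda>_. d0) C lam"
    unfolding y_def by (rule backward_dual_in_Y_set[OF lam d0_nonneg C_nonneg])
  have last: "y n = C \<or> y n = - d0"
    unfolding y_def by (rule backward_dual_last)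
  have step: "\<forall>i\<in>{1..n-1}. y i = - d0 \<or> y i = y (i + 1) + lam (i + 1)"
  proof
    fix i assume "i \<in> {1..n-1}"
    then have "i < n" by auto
    then show "y i = - d0 \<or> y i = y (i + 1) + lam (i + 1)"
      unfolding y_def by (rule backward_dual_step)
  qed
  have "a = (\<Sum>i=1..n. y i * (mu i - s i) - rho * \<bar>mu i - muh i\<bar> powr p - rho * \<bar>lam i - lamh i\<bar> powr p)"
    unfolding a y_def g_val_eq_backward_dual_value[OF n_pos lam d0_nonneg C_nonneg]
    by (rule dual_value_minus_penalty_split)
  also have "\<dots> \<le> (\<Sum>i=1..n. f_comp uL uU p muh lamh rho s i (lam i) (y i))"
  proof (rule sum_mono)
    fix i assume "i \<in> {1..n}"
    with box show "y i * (mu i - s i) - rho * \<bar>mu i - muh i\<bar> powr p - rho * \<bar>lam i - lamh i\<bar> powr p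
        \<le> f_comp uL uU p muh lamh rho s i (lam i) (y i)"
      by (intro f_comp_ge[OF rho_nonneg]) auto
  qed
  finally show ?thesis
    using \<open>lam \<in> Lambda_set n K\<close> Y last step structured_dual_in_Yi_set[OF lam01 last step] by blast
qed

lemma structured_dual_values_bdd_above: "bdd_above structured_dual_values"
proof (rule bdd_aboveI, clarify)
  fix lam y assume lam: "lam \<in> Lambda_set n K" and Yi: "\<forall>i\<in>{1..n}. y i \<in> Yi_set n d0 C i"
  show "(\<Sum>i=1..n. f_comp uL uU p muh lamh rho s i (lam i) (y i))
      \<le> (\<Sum>i=1..n. (d0 + C + real n) * (\<bar>uL i\<bar> + \<bar>uU i\<bar> + \<bar>s i\<bar>))"
  proof (rule sum_mono)
    fix i assume i: "i \<in> {1..n}"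
    have "y i \<in> Yi_set n d0 C i" using Yi i by blast
    then obtain m where "m \<le> n - i" and "y i = - d0 + real m \<or> y i = C + real m"
      unfolding Yi_set_def by blast
    then have "\<bar>y i\<bar> \<le> d0 + C + real n"
      using d0_nonneg C_nonneg by auto
    moreover have "lam i = 0 \<or> lam i = 1"
      using lam i by (simp add: Lambda_set_def)
    then have "\<bar>uL i * lam i\<bar> + \<bar>uU i * lam i\<bar> + \<bar>s i\<bar> \<le> \<bar>uL i\<bar> + \<bar>uU i\<bar> + \<bar>s i\<bar>"
      by auto
    ultimately have "\<bar>y i\<bar> * (\<bar>uL i * lam i\<bar> + \<bar>uU i * lam i\<bar> + \<bar>s i\<bar>)
        \<le> (d0 + C + real n) * (\<bar>uL i\<bar> + \<bar>uU i\<bar> + \<bar>s i\<bar>)"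
      using d0_nonneg C_nonneg by (intro mult_mono) simp_all
    with f_comp_le[OF rho_nonneg] Lambda_set_box_nonempty[OF lam] i
    show "f_comp uL uU p muh lamh rho s i (lam i) (y i) \<le> (d0 + C + real n) * (\<bar>uL i\<bar> + \<bar>uU i\<bar> + \<bar>s i\<bar>)"
      by (blast intro: order_trans)
  qed
qed

lemma dual_values_approximated:
  assumes "b \<in> dual_values" and "0 < e"
  shows "\<exists>a\<in>omega_objectives. b - e \<le> a"
proof -
  from assms obtain lam y where lam: "lam \<in> Lambda_set n K" and y: "y \<in> Y_set n (\<lambda>_. 1) (\<lambda>_. d0) C lam"
    and b: "b = (\<Sum>i=1..n. f_comp uL uU p muh lamh rho s i (lam i) (y i))"
    by blast
  obtain mu where box: "\<forall>i\<in>{1..n}. uL i * lam i \<le> mu i \<and> mu i \<le> uU i * lam i"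
    and approx: "b - e
      \<le> (\<Sum>i=1..n. y i * (mu i - s i) - rho * \<bar>mu i - muh i\<bar> powr p - rho * \<bar>lam i - lamh i\<bar> powr p)"
    unfolding b using sum_f_comp_approx[OF Lambda_set_box_nonempty[OF lam] \<open>0 < e\<close>] by blast
  have "(\<Sum>i=1..n. y i * (mu i - s i))
        - rho * ((\<Sum>i=1..n. \<bar>mu i - muh i\<bar> powr p) + (\<Sum>i=1..n. \<bar>lam i - lamh i\<bar> powr p))
      \<le> g_val n (\<lambda>_. 1) (\<lambda>_. d0) C s (mu, lam)
        - rho * ((\<Sum>i=1..n. \<bar>mu i - muh i\<bar> powr p) + (\<Sum>i=1..n. \<bar>lam i - lamh i\<bar> powr p))"
    using dual_value_le_g_val[OF n_pos y] by simp
  with approx have "b - e \<le> g_val n (\<lambda>_. 1) (\<lambda>_. d0) C s (mu, lam)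
        - rho * ((\<Sum>i=1..n. \<bar>mu i - muh i\<bar> powr p) + (\<Sum>i=1..n. \<bar>lam i - lamh i\<bar> powr p))"
    unfolding dual_value_minus_penalty_split by (rule order_trans)
  moreover have "(mu, lam) \<in> Xi_set n K uL uU"
    using lam box by (simp add: Xi_set_def)
  ultimately show ?thesis
    by blast
qed

end

theorem proposition4:
  fixes n N K :: nat and T d0 C p rho :: real
    and uL uU s :: "nat \<Rightarrow> real" and muhat lamhat :: "nat \<Rightarrow> nat \<Rightarrow> real" and j :: nat
  assumes "1 \<le> n" and "1 \<le> N" and "0 < T"
    and "0 \<le> d0" and "0 \<le> C"
    and "\<forall>i\<in>{1..n}. 0 \<le> uL i \<and> uL i < uU i"
    and "1 \<le> K" and "K \<le> n"
    and "\<forall>k\<in>{1..N}. (muhat k, lamhat k) \<in> Xi_set n K uL uU"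
    and "1 \<le> p" and "j \<in> {1..N}" and "0 \<le> rho" and "s \<in> S_set n T"
  shows "omega' n K uL uU (\<lambda>_. 1) (\<lambda>_. d0) C p (muhat j) (lamhat j) rho s =
           Sup {\<Sum>i=1..n. f_comp uL uU p (muhat j) (lamhat j) rho s i (lam i) (y i)
                | lam y. lam \<in> Lambda_set n K \<and> y \<in> Y_set n (\<lambda>_. 1) (\<lambda>_. d0) C lam}
       \<and> omega' n K uL uU (\<lambda>_. 1) (\<lambda>_. d0) C p (muhat j) (lamhat j) rho s =
           Sup {\<Sum>i=1..n. f_comp uL uU p (muhat j) (lamhat j) rho s i (lam i) (y i)
                | lam y. lam \<in> Lambda_set n K \<and> y \<in> Y_set n (\<lambda>_. 1) (\<lambda>_. d0) C lam
                  \<and> (y n = C \<or> y n = - d0)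
                  \<and> (\<forall>i\<in>{1..n-1}. y i = - d0 \<or> y i = y (i + 1) + lam (i + 1))
                  \<and> (\<forall>i\<in>{1..n}. y i \<in> Yi_set n d0 C i)}"
proof -
  note setting = assms(1,4,5,12,6)
  have "(muhat j, lamhat j) \<in> Xi_set n K uL uU"
    using assms(9,11) by blast
  then show ?thesis
    unfolding omega'_def
    by (rule cSup_eq_by_approximation[OF omega_objectives_nonempty[OF setting] _
          structured_dual_values_bdd_above[OF setting]
          omega_objectives_dominated[OF setting] dual_values_approximated[OF setting]])
      blast
qed

end
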